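(* Let $\rho\in[-1,1]$ and $M\sim\mathrm{Elliptic}(n,\rho)$. Let $\boldsymbol q\in\mathbb{R}^n$ be a deterministic unit-norm vector and $P$ a deterministic orthogonal projection matrix onto a subspace of $\mathbb{R}^n$ with $P\boldsymbol q=0$. Then $$(M-\rho PM^\top)\boldsymbol q\sim\mathcal N\big(0,\ I-\rho^2P+\rho\,\boldsymbol q\boldsymbol q^\top\big).$$
   Context: $M\sim\mathrm{Elliptic}(n,\rho)$ means: $M_{ii}\sim\mathcal N(0,1+\rho)$, for $i<j$ $(M_{ij},M_{ji})$ is centered Gaussian with variances 1 and covariance $\rho$, and all elements of $\{M_{ii}\}_i\cup\{(M_{ij},M_{ji})\}_{i<j}$ are independent. *)

theory Defs
  imports "HOL-Probability.Probability"
begin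

definition centered_normal :: "real \<Rightarrow> real measure" where
  "centered_normal v =
     (if v = 0 then return lborel 0 else density lborel (normal_density 0 (sqrt v)))"

text \<open>A centered (possibly degenerate) Gaussian random vector with covariance
  quadratic form Q: every linear functional u \<bullet> X is centered normal with
  variance Q u.\<close>
definition centered_gaussian_vec ::
  "'w measure \<Rightarrow> ('w \<Rightarrow> 'b::euclidean_space) \<Rightarrow> ('b \<Rightarrow> real) \<Rightarrow> bool" where
  "centered_gaussian_vec \<Omega> X Q \<longleftrightarrow>
     X \<in> borel_measurable \<Omega> \<and>
     (\<forall>u. distr \<Omega> lborel (\<lambda>\<omega>. u \<bullet> X \<omega>) = centered_normal (Q u))"

definition outer :: "real^'n \<Rightarrow> real^'n \<Rightarrow> real^'n^'n" where
  "outer p q = (\<chi> i j. p $ i * q $ j)"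

text \<open>The independent family is indexed by
  pairs (i,j) with i \<le> j: for i < j it is the pair (M_ij, M_ji); for i = j the
  pair (M_ii, M_ii) which generates the same sigma-algebra as M_ii.\<close>
definition elliptic ::
  "'w measure \<Rightarrow> real \<Rightarrow> ('w \<Rightarrow> real^('n::{finite,linorder})^('n::{finite,linorder})) \<Rightarrow> bool" where
  "elliptic \<Omega> \<rho> M \<longleftrightarrow>
     prob_space \<Omega> \<and>
     M \<in> borel_measurable \<Omega> \<and>
     (\<forall>i. distr \<Omega> lborel (\<lambda>\<omega>. M \<omega> $ i $ i) = centered_normal (1 + \<rho>)) \<and>
     (\<forall>i j. i < j \<longrightarrow>
        centered_gaussian_vec \<Omega> (\<lambda>\<omega>. (M \<omega> $ i $ j, M \<omega> $ j $ i))
          (\<lambda>(a, b). a\<^sup>2 + b\<^sup>2 + 2 * \<rho> * a * b)) \<and>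
     prob_space.indep_vars \<Omega> (\<lambda>_. borel)
        (\<lambda>(i, j) \<omega>. (M \<omega> $ i $ j, M \<omega> $ j $ i)) {(i, j). i \<le> j}"

end

theory Submission
  imports Defs
begin

text \<open>Fix a test vector u. The functional u \<bullet> ((M - \<rho> P M^T) q) is a linear combination
  sum_ij c_ij M_ij of the entries, with c_ij = u_i q_j - \<rho> q_i (P u)_j. Grouping the entries
  into the independent blocks M_ii and (M_ij, M_ji), i < j, writes it as a sum of independent
  centered normals, so by characteristic functions it is centered normal with variance
  sum_ij (c_ij^2 + \<rho> c_ij c_ji). Expanding this sum with |q| = 1, P^2 = P = P^T and P q = 0
  gives u \<bullet> ((I - \<rho>^2 P + \<rho> q q^T) u).\<close>

lemma distr_lborel_eq_distr_borel: "distr \<Omega> lborel f = distr \<Omega> borel f"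
  by (rule distr_cong) auto

lemma real_distribution_centered_normal: "0 \<le> v \<Longrightarrow> real_distribution (centered_normal v)"
  unfolding centered_normal_def real_distribution_def real_distribution_axioms_def
  by (auto intro!: prob_space_return prob_space_normal_density)

lemma char_distr_scaled:
  assumes "f \<in> borel_measurable \<Omega>"
  shows "char (distr \<Omega> borel (\<lambda>x. c * f x)) t = char (distr \<Omega> borel f) (t * c)"
  using assms by (simp add: char_def integral_distr mult.assoc)

lemma char_centered_normal:
  assumes "0 \<le> v"
  shows "char (centered_normal v) t = complex_of_real (exp (- (v * t\<^sup>2) / 2))"
proof (cases "v = 0")
  case True
  then show ?thesis by (simp add: centered_normal_def char_def integral_return)
next
  case False
  let ?S = "std_normal_distribution"
  have s_pos: "0 < sqrt v" using False assms by simp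
  interpret S: prob_space ?S by (rule prob_space_normal_density) simp
  have "distributed ?S lborel (\<lambda>x. x) std_normal_density"
    unfolding distributed_def by (simp add: distr_id2)
  then have "distributed ?S lborel (\<lambda>x. 0 + sqrt v * x)
      (normal_density (0 + sqrt v * 0) (\<bar>sqrt v\<bar> * 1))"
    by (rule S.normal_density_affine) (use s_pos in auto)
  then have "centered_normal v = distr ?S borel (\<lambda>x. sqrt v * x)"
    using s_pos False by (simp add: distributed_def centered_normal_def distr_lborel_eq_distr_borel)
  then have "char (centered_normal v) t = char (distr ?S borel (\<lambda>x. x)) (t * sqrt v)"
    using char_distr_scaled[of "\<lambda>x. x" ?S "sqrt v" t] by simp
  also have "\<dots> = complex_of_real (exp (- (v * t\<^sup>2) / 2))"
    using assms by (simp add: distr_id2 char_std_normal_distribution power_mult_distrib mult.commute)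
  finally show ?thesis .
qed

lemma (in prob_space) distr_eq_centered_normalI:
  assumes "X \<in> borel_measurable M" "0 \<le> v"
    and "\<And>t. char (distr M borel X) t = complex_of_real (exp (- (v * t\<^sup>2) / 2))"
  shows "distr M lborel X = centered_normal v"
  unfolding distr_lborel_eq_distr_borel
  by (rule Levy_uniqueness)
    (use assms real_distribution_centered_normal char_centered_normal real_distribution_distr in auto)

lemma (in prob_space) distr_scaled_centered_normal:
  assumes "X \<in> borel_measurable M" "0 \<le> v" "distr M lborel X = centered_normal v"
  shows "distr M lborel (\<lambda>\<omega>. a * X \<omega>) = centered_normal (a\<^sup>2 * v)"
proof (rule distr_eq_centered_normalI)
  fix t
  have "char (distr M borel (\<lambda>\<omega>. a * X \<omega>)) t = char (distr M borel X) (t * a)"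
    using assms(1) by (rule char_distr_scaled)
  also have "\<dots> = char (centered_normal v) (t * a)"
    using assms(3) by (simp add: distr_lborel_eq_distr_borel)
  finally show "char (distr M borel (\<lambda>\<omega>. a * X \<omega>)) t = complex_of_real (exp (- (a\<^sup>2 * v * t\<^sup>2) / 2))"
    using assms by (simp add: char_centered_normal power_mult_distrib ac_simps)
qed (use assms in auto)

lemma (in prob_space) distr_sum_indep_centered_normal:
  assumes "finite A" "indep_vars (\<lambda>_. borel) Y A"
    and "\<And>p. p \<in> A \<Longrightarrow> 0 \<le> v p"
    and "\<And>p. p \<in> A \<Longrightarrow> distr M lborel (Y p) = centered_normal (v p)"
  shows "distr M lborel (\<lambda>\<omega>. \<Sum>p\<in>A. Y p \<omega>) = centered_normal (\<Sum>p\<in>A. v p)"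
proof (rule distr_eq_centered_normalI)
  have "p \<in> A \<Longrightarrow> Y p \<in> borel_measurable M" for p
    using assms(2) unfolding indep_vars_def2 by auto
  then show "(\<lambda>\<omega>. \<Sum>p\<in>A. Y p \<omega>) \<in> borel_measurable M" by auto
  show "0 \<le> (\<Sum>p\<in>A. v p)" using assms(3) by (rule sum_nonneg)
  fix t
  have "char (distr M borel (\<lambda>\<omega>. \<Sum>p\<in>A. Y p \<omega>)) t = (\<Prod>p\<in>A. char (distr M borel (Y p)) t)"
    using assms(2) by (rule char_distr_sum)
  also have "\<dots> = (\<Prod>p\<in>A. complex_of_real (exp (- (v p * t\<^sup>2) / 2)))"
    using assms(3,4) by (auto simp: char_centered_normal distr_lborel_eq_distr_borel[symmetric]
        intro!: prod.cong)
  also have "\<dots> = complex_of_real (exp (\<Sum>p\<in>A. - (v p * t\<^sup>2) / 2))"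
    using assms(1) by (simp add: exp_sum)
  also have "(\<Sum>p\<in>A. - (v p * t\<^sup>2) / 2) = - ((\<Sum>p\<in>A. v p) * t\<^sup>2) / 2"
    by (simp add: sum_divide_distrib[symmetric] sum_distrib_right[symmetric] sum_negf)
  finally show "char (distr M borel (\<lambda>\<omega>. \<Sum>p\<in>A. Y p \<omega>)) t =
      complex_of_real (exp (- ((\<Sum>p\<in>A. v p) * t\<^sup>2) / 2))" .
qed

lemma centered_gaussian_vecI:
  assumes "\<And>u. (\<lambda>\<omega>. u \<bullet> X \<omega>) \<in> borel_measurable \<Omega>"
    and "\<And>u. distr \<Omega> lborel (\<lambda>\<omega>. u \<bullet> X \<omega>) = centered_normal (Q u)"
  shows "centered_gaussian_vec \<Omega> X Q"
  unfolding centered_gaussian_vec_def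
proof (intro conjI allI assms(2))
  show "X \<in> borel_measurable \<Omega>"
    using assms(1) by (subst borel_measurable_euclidean_space) (simp add: inner_commute)
qed

definition upper_block :: "('n \<Rightarrow> 'n \<Rightarrow> 'a::comm_monoid_add) \<Rightarrow> 'n \<Rightarrow> 'n \<Rightarrow> 'a" where
  "upper_block g i j = (if i = j then g i i else g i j + g j i)"

lemma sum_sum_eq_sum_upper_block:
  fixes g :: "'n::{finite,linorder} \<Rightarrow> 'n \<Rightarrow> 'a::comm_monoid_add"
  shows "(\<Sum>i\<in>UNIV. \<Sum>j\<in>UNIV. g i j) = (\<Sum>(i, j)\<in>{(i, j). i \<le> j}. upper_block g i j)"
proof -
  let ?L = "{(i::'n, j). i \<le> j}" and ?G = "{(i::'n, j). j < i}" and ?S = "{(i::'n, j). i < j}"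
  have "(\<Sum>i\<in>UNIV. \<Sum>j\<in>UNIV. g i j) = (\<Sum>(i, j)\<in>UNIV. g i j)"
    by (simp add: sum.cartesian_product)
  also have "UNIV = ?L \<union> ?G" by auto
  also have "(\<Sum>(i, j)\<in>?L \<union> ?G. g i j) = (\<Sum>(i, j)\<in>?L. g i j) + (\<Sum>(i, j)\<in>?G. g i j)"
    by (rule sum.union_disjoint) auto
  also have "(\<Sum>(i, j)\<in>?G. g i j) = (\<Sum>(i, j)\<in>?S. g j i)"
    by (rule sum.reindex_bij_witness[of _ prod.swap prod.swap]) auto
  also have "\<dots> = (\<Sum>(i, j)\<in>?L. if i = j then 0 else g j i)"
    by (rule sum.mono_neutral_cong_left) (auto split: if_splits)
  finally show ?thesis
    by (auto simp: upper_block_def sum.distrib[symmetric] intro!: sum.cong)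
qed

lemma borel_measurable_matrix_entry: "(\<lambda>A::real^'n^'m. A $ i $ j) \<in> borel_measurable borel"
  by (intro borel_measurable_continuous_onI continuous_intros)

lemma elliptic_entry_measurable:
  assumes "elliptic \<Omega> \<rho> M"
  shows "(\<lambda>\<omega>. M \<omega> $ i $ j) \<in> borel_measurable \<Omega>"
proof -
  have "M \<in> borel_measurable \<Omega>" using assms by (simp add: elliptic_def)
  then show ?thesis using borel_measurable_matrix_entry by (rule measurable_compose)
qed

lemma correlated_variance_nonneg:
  fixes a b \<rho> :: real
  assumes "-1 \<le> \<rho>" "\<rho> \<le> 1"
  shows "0 \<le> a\<^sup>2 + b\<^sup>2 + 2 * \<rho> * a * b"
proof -
  have "\<bar>\<rho> * (a * b)\<bar> \<le> \<bar>a * b\<bar>"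
    using assms by (simp add: abs_mult mult_left_le_one_le)
  moreover have "0 \<le> (\<bar>a\<bar> - \<bar>b\<bar>)\<^sup>2" by simp
  moreover have "(\<bar>a\<bar> - \<bar>b\<bar>)\<^sup>2 = a\<^sup>2 + b\<^sup>2 - 2 * \<bar>a * b\<bar>"
    by (simp add: power2_eq_square algebra_simps abs_mult)
  ultimately show ?thesis by (simp add: algebra_simps)
qed

lemma upper_block_correlated_variance_nonneg:
  fixes c :: "'n \<Rightarrow> 'n \<Rightarrow> real"
  assumes "-1 \<le> \<rho>" "\<rho> \<le> 1"
  shows "0 \<le> upper_block (\<lambda>i j. (c i j)\<^sup>2 + \<rho> * c i j * c j i) i j"
  using assms correlated_variance_nonneg[OF assms, of "c i j" "c j i"]
  by (auto simp: upper_block_def power2_eq_square algebra_simps)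

lemma elliptic_upper_block_distr:
  fixes c :: "'n::{finite,linorder} \<Rightarrow> 'n \<Rightarrow> real"
  assumes "elliptic \<Omega> \<rho> M" "-1 \<le> \<rho>" "i \<le> j"
  shows "distr \<Omega> lborel (\<lambda>\<omega>. upper_block (\<lambda>i j. c i j * M \<omega> $ i $ j) i j) =
    centered_normal (upper_block (\<lambda>i j. (c i j)\<^sup>2 + \<rho> * c i j * c j i) i j)"
proof (cases "i = j")
  case True
  interpret prob_space \<Omega> using assms(1) by (simp add: elliptic_def)
  have "distr \<Omega> lborel (\<lambda>\<omega>. c i i * M \<omega> $ i $ i) = centered_normal ((c i i)\<^sup>2 * (1 + \<rho>))"
    using assms by (intro distr_scaled_centered_normal elliptic_entry_measurable)
      (auto simp: elliptic_def)
  then show ?thesis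
    using True by (simp add: upper_block_def power2_eq_square algebra_simps)
next
  case False
  then have "centered_gaussian_vec \<Omega> (\<lambda>\<omega>. (M \<omega> $ i $ j, M \<omega> $ j $ i))
      (\<lambda>(a, b). a\<^sup>2 + b\<^sup>2 + 2 * \<rho> * a * b)"
    using assms by (simp add: elliptic_def)
  then have "distr \<Omega> lborel (\<lambda>\<omega>. (c i j, c j i) \<bullet> (M \<omega> $ i $ j, M \<omega> $ j $ i)) =
      centered_normal ((c i j)\<^sup>2 + (c j i)\<^sup>2 + 2 * \<rho> * c i j * c j i)"
    unfolding centered_gaussian_vec_def by simp
  then show ?thesis
    using False by (simp add: upper_block_def power2_eq_square algebra_simps)
qed

lemma elliptic_linear_combination_distr:
  fixes c :: "'n::{finite,linorder} \<Rightarrow> 'n \<Rightarrow> real"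
  assumes "elliptic \<Omega> \<rho> M" "-1 \<le> \<rho>" "\<rho> \<le> 1"
  shows "distr \<Omega> lborel (\<lambda>\<omega>. \<Sum>i\<in>UNIV. \<Sum>j\<in>UNIV. c i j * M \<omega> $ i $ j) =
    centered_normal (\<Sum>i\<in>UNIV. \<Sum>j\<in>UNIV. (c i j)\<^sup>2 + \<rho> * c i j * c j i)"
proof -
  interpret prob_space \<Omega> using assms(1) by (simp add: elliptic_def)
  define T where "T = {(i::'n, j). i \<le> j}"
  define Y where "Y = (\<lambda>(i, j) \<omega>. upper_block (\<lambda>i j. c i j * M \<omega> $ i $ j) i j)"
  define h where "h = (\<lambda>(i, j) (z::real \<times> real). c i j * fst z + (if i = j then 0 else c j i) * snd z)"
  have "indep_vars (\<lambda>_. borel) (\<lambda>(i, j) \<omega>. (M \<omega> $ i $ j, M \<omega> $ j $ i)) T"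
    using assms(1) by (simp add: elliptic_def T_def)
  then have "indep_vars (\<lambda>_. borel) (\<lambda>p \<omega>. h p ((\<lambda>(i, j) \<omega>. (M \<omega> $ i $ j, M \<omega> $ j $ i)) p \<omega>)) T"
    by (rule indep_vars_compose2)
      (auto simp: h_def split: prod.split intro!: borel_measurable_continuous_onI continuous_intros)
  also have "(\<lambda>p \<omega>. h p ((\<lambda>(i, j) \<omega>. (M \<omega> $ i $ j, M \<omega> $ j $ i)) p \<omega>)) = Y"
    by (auto simp: h_def Y_def upper_block_def fun_eq_iff)
  finally have "distr \<Omega> lborel (\<lambda>\<omega>. \<Sum>p\<in>T. Y p \<omega>) =
      centered_normal (\<Sum>(i, j)\<in>T. upper_block (\<lambda>i j. (c i j)\<^sup>2 + \<rho> * c i j * c j i) i j)"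
    using assms upper_block_correlated_variance_nonneg elliptic_upper_block_distr
    by (intro distr_sum_indep_centered_normal) (auto simp: T_def Y_def)
  then show ?thesis
    by (simp add: sum_sum_eq_sum_upper_block T_def Y_def case_prod_beta')
qed

lemma inner_symmetric_matrix_vector_mult:
  assumes "transpose P = (P::real^'n^'n)"
  shows "u \<bullet> (P *v y) = (P *v u) \<bullet> y"
  by (metis assms dot_lmul_matrix vector_transpose_matrix)

lemma inner_sub_projected_transpose_eq_sum:
  assumes "transpose P = (P::real^'n^'n)"
  shows "u \<bullet> ((A - \<rho> *\<^sub>R (P ** transpose A)) *v q) =
     (\<Sum>i\<in>UNIV. \<Sum>j\<in>UNIV. (u$i * q$j - \<rho> * q$i * (P *v u)$j) * A$i$j)"
proof -
  define w where "w = P *v u"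
  have "u \<bullet> ((A - \<rho> *\<^sub>R (P ** transpose A)) *v q) = u \<bullet> (A *v q) - \<rho> * (w \<bullet> (transpose A *v q))"
    unfolding w_def by (simp add: matrix_vector_mult_diff_rdistrib scaleR_matrix_vector_assoc[symmetric]
        inner_diff_right matrix_vector_mul_assoc[symmetric] inner_symmetric_matrix_vector_mult[OF assms])
  also have "u \<bullet> (A *v q) = (\<Sum>i\<in>UNIV. \<Sum>j\<in>UNIV. u$i * q$j * A$i$j)"
    by (simp add: inner_vec_def matrix_vector_mult_def sum_distrib_left ac_simps)
  also have "w \<bullet> (transpose A *v q) = (\<Sum>j\<in>UNIV. \<Sum>i\<in>UNIV. q$i * w$j * A$i$j)"
    by (simp add: inner_vec_def matrix_vector_mult_def transpose_def sum_distrib_left ac_simps)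
  also have "\<dots> = (\<Sum>i\<in>UNIV. \<Sum>j\<in>UNIV. q$i * w$j * A$i$j)"
    by (rule sum.swap)
  finally show ?thesis
    by (simp add: w_def sum_distrib_left sum_subtractf[symmetric] algebra_simps)
qed

lemma sum_sum_const_mult_product:
  "(\<Sum>i\<in>UNIV. \<Sum>j\<in>UNIV. (k::real) * (f i * g j)) = k * ((\<Sum>i\<in>UNIV. f i) * (\<Sum>j\<in>UNIV. g j))"
  by (simp add: sum_product sum_distrib_left[symmetric])

lemma sum_variance_eq_quadratic_form:
  fixes q u :: "real^'n" and P :: "real^'n^'n" and \<rho> :: real
  assumes "norm q = 1" "P ** P = P" "transpose P = P" "P *v q = 0"
  defines "c \<equiv> \<lambda>i j. u$i * q$j - \<rho> * q$i * (P *v u)$j"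
  shows "(\<Sum>i\<in>UNIV. \<Sum>j\<in>UNIV. (c i j)\<^sup>2 + \<rho> * c i j * c j i) =
     u \<bullet> ((mat 1 - \<rho>\<^sup>2 *\<^sub>R P + \<rho> *\<^sub>R outer q q) *v u)"
proof -
  define w where "w = P *v u"
  have qq: "(\<Sum>j\<in>UNIV. q$j * q$j) = 1"
    using assms(1) by (simp add: norm_eq_1 inner_vec_def)
  have "q \<bullet> w = 0"
    by (simp add: w_def inner_symmetric_matrix_vector_mult[OF assms(3)] assms(4))
  then have qw: "(\<Sum>j\<in>UNIV. q$j * w$j) = 0" by (simp add: inner_vec_def)
  have "w \<bullet> w = (P *v w) \<bullet> u"
    unfolding w_def by (subst inner_symmetric_matrix_vector_mult[OF assms(3)]) (simp add: inner_commute)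
  also have "P *v w = w" by (simp add: w_def matrix_vector_mul_assoc assms(2))
  finally have ww: "(\<Sum>j\<in>UNIV. w$j * w$j) = (\<Sum>j\<in>UNIV. u$j * w$j)"
    by (simp add: inner_vec_def mult.commute)
  have "u \<bullet> (outer q q *v u) = (\<Sum>j\<in>UNIV. u$j * q$j) * (\<Sum>j\<in>UNIV. u$j * q$j)"
    by (simp add: inner_vec_def outer_def matrix_vector_mult_def sum_product sum_distrib_left ac_simps)
  then have rhs: "u \<bullet> ((mat 1 - \<rho>\<^sup>2 *\<^sub>R P + \<rho> *\<^sub>R outer q q) *v u) =
      (\<Sum>j\<in>UNIV. u$j * u$j) - \<rho>\<^sup>2 * (\<Sum>j\<in>UNIV. u$j * w$j)
      + \<rho> * ((\<Sum>j\<in>UNIV. u$j * q$j) * (\<Sum>j\<in>UNIV. u$j * q$j))"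
    by (simp add: matrix_vector_mult_add_rdistrib matrix_vector_mult_diff_rdistrib
        scaleR_matrix_vector_assoc[symmetric] inner_add_right inner_diff_right w_def) (simp add: inner_vec_def)
  txt \<open>Every monomial splits as f i * g j, so each double sum factors into inner products,
    which |q| = 1, q \<bullet> w = 0 and |w|^2 = u \<bullet> w collapse.\<close>
  have expand: "(c i j)\<^sup>2 + \<rho> * c i j * c j i =
      (u$i*u$i) * (q$j*q$j) - 2*\<rho> * ((u$i*q$i) * (q$j*w$j)) + \<rho>\<^sup>2 * ((q$i*q$i) * (w$j*w$j))
      + \<rho> * ((u$i*q$i) * (u$j*q$j)) - \<rho>\<^sup>2 * ((u$i*w$i) * (q$j*q$j))
      - \<rho>\<^sup>2 * ((q$i*q$i) * (u$j*w$j)) + \<rho>^3 * ((q$i*w$i) * (q$j*w$j))" for i j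
    unfolding c_def w_def[symmetric] by (simp add: power2_eq_square power3_eq_cube algebra_simps)
  show ?thesis
    unfolding expand rhs
    by (simp only: sum.distrib sum_subtractf sum_product[symmetric] sum_sum_const_mult_product qq qw ww)
qed

theorem proposition3:
  fixes \<Omega> :: "'w measure"
    and M :: "'w \<Rightarrow> real^('n::{finite,linorder})^('n::{finite,linorder})"
    and \<rho> :: real and q :: "real^('n::{finite,linorder})" and P :: "real^('n::{finite,linorder})^('n::{finite,linorder})"
  assumes "-1 \<le> \<rho>" and "\<rho> \<le> 1"
    and "elliptic \<Omega> \<rho> M"
    and "norm q = 1"
    and "P ** P = P" and "transpose P = P"
    and "P *v q = 0"
  shows "centered_gaussian_vec \<Omega>
           (\<lambda>\<omega>. (M \<omega> - \<rho> *\<^sub>R (P ** transpose (M \<omega>))) *v q)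
           (\<lambda>u. u \<bullet> ((mat 1 - \<rho>\<^sup>2 *\<^sub>R P + \<rho> *\<^sub>R outer q q) *v u))"
proof (rule centered_gaussian_vecI)
  fix u
  define c where "c = (\<lambda>i j. u$i * q$j - \<rho> * q$i * (P *v u)$j)"
  have functional: "(\<lambda>\<omega>. u \<bullet> ((M \<omega> - \<rho> *\<^sub>R (P ** transpose (M \<omega>))) *v q)) =
      (\<lambda>\<omega>. \<Sum>i\<in>UNIV. \<Sum>j\<in>UNIV. c i j * M \<omega> $ i $ j)"
    by (simp add: c_def inner_sub_projected_transpose_eq_sum[OF assms(6)])
  show "(\<lambda>\<omega>. u \<bullet> ((M \<omega> - \<rho> *\<^sub>R (P ** transpose (M \<omega>))) *v q)) \<in> borel_measurable \<Omega>"
    unfolding functional using elliptic_entry_measurable[OF assms(3)] by auto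
  show "distr \<Omega> lborel (\<lambda>\<omega>. u \<bullet> ((M \<omega> - \<rho> *\<^sub>R (P ** transpose (M \<omega>))) *v q)) =
      centered_normal (u \<bullet> ((mat 1 - \<rho>\<^sup>2 *\<^sub>R P + \<rho> *\<^sub>R outer q q) *v u))"
    unfolding functional elliptic_linear_combination_distr[OF assms(3,1,2)] c_def
    using sum_variance_eq_quadratic_form[OF assms(4-7)] by simp
qed

end
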